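(* Let $n=2k$ with $k\ge 2$. Then $W=\{c_1,v\}$ is a local resolving set of $U_n$, where $v=e_1$ if $k=2$, $v=c_2$ if $k=3$, $v=d_4$ if $k=4$, and $v=c_k$ if $k\ge 5$.
   Context: For $n\ge 3$, $U_n$ is the graph with vertex set $\{a_i,b_i,c_i,d_i,e_i : 1\le i\le n\}$ and edge set $\{a_ia_{i+1}, b_ib_{i+1}, e_ie_{i+1}, a_ib_i, b_ic_i, c_id_i, d_ie_i, c_{i+1}d_i : 1\le i\le n\}$, indices taken modulo $n$. A vertex $w$ resolves $u,v$ if $d(u,w)\neq d(v,w)$ ($d$ the graph distance). A set $W$ is a local resolving set if every two adjacent vertices are resolved by some element of $W$. *)

theory Defs
  imports Main
begin

datatype lbl = LA | LB | LC | LD | LE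

type_synonym vtx = "lbl \<times> nat"

text \<open>Vertex (LA, i) stands for a_i, etc., with 1 <= i <= n.\<close>

definition nxt :: "nat \<Rightarrow> nat \<Rightarrow> nat" where
  "nxt n i = i mod n + 1"

definition U_verts :: "nat \<Rightarrow> vtx set" where
  "U_verts n = UNIV \<times> {1..n}"

definition U_edges :: "nat \<Rightarrow> (vtx \<times> vtx) set" where
  "U_edges n = (\<Union>i\<in>{1..n}.
     {((LA,i),(LA,nxt n i)), ((LB,i),(LB,nxt n i)), ((LE,i),(LE,nxt n i)),
      ((LA,i),(LB,i)), ((LB,i),(LC,i)), ((LC,i),(LD,i)), ((LD,i),(LE,i)),
      ((LC,nxt n i),(LD,i))})"

definition U_adj :: "nat \<Rightarrow> vtx \<Rightarrow> vtx \<Rightarrow> bool" where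
  "U_adj n u v \<longleftrightarrow> (u, v) \<in> U_edges n \<or> (v, u) \<in> U_edges n"

fun walk_of_len :: "('a \<Rightarrow> 'a \<Rightarrow> bool) \<Rightarrow> nat \<Rightarrow> 'a \<Rightarrow> 'a \<Rightarrow> bool" where
  "walk_of_len adj 0 u v \<longleftrightarrow> u = v"
| "walk_of_len adj (Suc k) u v \<longleftrightarrow> (\<exists>w. adj u w \<and> walk_of_len adj k w v)"

text \<open>Graph distance: length of a shortest walk (the graphs considered are connected).\<close>
definition gdist :: "('a \<Rightarrow> 'a \<Rightarrow> bool) \<Rightarrow> 'a \<Rightarrow> 'a \<Rightarrow> nat" where
  "gdist adj u v = (LEAST k. walk_of_len adj k u v)"

definition resolves :: "('a \<Rightarrow> 'a \<Rightarrow> bool) \<Rightarrow> 'a \<Rightarrow> 'a \<Rightarrow> 'a \<Rightarrow> bool" where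
  "resolves adj w u v \<longleftrightarrow> gdist adj u w \<noteq> gdist adj v w"

definition local_resolving_set :: "'a set \<Rightarrow> ('a \<Rightarrow> 'a \<Rightarrow> bool) \<Rightarrow> 'a set \<Rightarrow> bool" where
  "local_resolving_set V adj W \<longleftrightarrow> W \<subseteq> V \<and>
     (\<forall>u\<in>V. \<forall>v\<in>V. adj u v \<longrightarrow> (\<exists>w\<in>W. resolves adj w u v))"

end

theory Submission
  imports Defs
begin

text \<open>
  The distance from \<open>c\<^sub>s\<close> has a closed form in the offset of the index from \<open>s\<close>; it is
  identified with the graph distance by checking that it is a potential: it vanishes only at
  \<open>c\<^sub>s\<close>, changes by at most one along every edge, and drops by one towards some neighbour of
  every other vertex. For \<open>n = 2k\<close>, \<open>c\<^sub>s\<close> fails to resolve an edge of the \<open>i\<close>-th cell only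
  if the offset of \<open>i\<close> from \<open>s\<close> lies in one of five small sets, one per type of edge, and for
  \<open>k = 3\<close> and \<open>k \<ge> 5\<close> the offsets from \<open>c\<^sub>1\<close> and from \<open>c\<^sub>2\<close> resp. \<open>c\<^sub>k\<close> never lie in the
  same set. For \<open>k = 2\<close> and \<open>k = 4\<close> the distances from \<open>e\<^sub>1\<close> and \<open>d\<^sub>4\<close> are tabulated and
  checked directly.
\<close>

lemma potential_le_walk_length:
  assumes closed: "\<And>u w. adj u w \<Longrightarrow> u \<in> V \<Longrightarrow> w \<in> V"
    and lip: "\<And>u w. adj u w \<Longrightarrow> u \<in> V \<Longrightarrow> f u \<le> f w + 1"
    and "f s = 0"
  shows "walk_of_len adj m u s \<Longrightarrow> u \<in> V \<Longrightarrow> f u \<le> m"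
proof (induction m arbitrary: u)
  case 0
  then show ?case using \<open>f s = 0\<close> by simp
next
  case (Suc m)
  then obtain w where w: "adj u w" "walk_of_len adj m w s" by auto
  with Suc closed have "f w \<le> m" by blast
  then show ?case using lip[OF w(1) Suc.prems(2)] by simp
qed

lemma walk_of_len_potential:
  assumes closed: "\<And>u w. adj u w \<Longrightarrow> u \<in> V \<Longrightarrow> w \<in> V"
    and desc: "\<And>u. u \<in> V \<Longrightarrow> 0 < f u \<Longrightarrow> \<exists>w. adj u w \<and> f w + 1 = f u"
    and zero: "\<And>u. u \<in> V \<Longrightarrow> f u = 0 \<Longrightarrow> u = s"
  shows "f u = m \<Longrightarrow> u \<in> V \<Longrightarrow> walk_of_len adj m u s"
proof (induction m arbitrary: u)
  case 0
  then show ?case using zero by simp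
next
  case (Suc m)
  then have "0 < f u" by simp
  then obtain w where w: "adj u w" "f w + 1 = f u" using desc Suc.prems(2) by blast
  moreover have "w \<in> V" using closed w(1) Suc.prems(2) .
  ultimately have "walk_of_len adj m w s" using Suc.IH[of w] Suc.prems(1) by simp
  with w show ?case by auto
qed

lemma gdist_eq_potential:
  assumes closed: "\<And>u w. adj u w \<Longrightarrow> u \<in> V \<Longrightarrow> w \<in> V"
    and lip: "\<And>u w. adj u w \<Longrightarrow> u \<in> V \<Longrightarrow> f u \<le> f w + 1"
    and desc: "\<And>u. u \<in> V \<Longrightarrow> 0 < f u \<Longrightarrow> \<exists>w. adj u w \<and> f w + 1 = f u"
    and zero: "\<And>u. u \<in> V \<Longrightarrow> f u = 0 \<Longrightarrow> u = s"
    and "f s = 0" and "u \<in> V"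
  shows "gdist adj u s = f u"
  unfolding gdist_def
proof (rule Least_equality)
  show "walk_of_len adj (f u) u s"
    by (rule walk_of_len_potential[where V = V and adj = adj and f = f and s = s,
                                   OF closed desc zero refl \<open>u \<in> V\<close>])
  show "f u \<le> m" if "walk_of_len adj m u s" for m
    by (rule potential_le_walk_length[where V = V and adj = adj and f = f and s = s,
                                       OF closed lip \<open>f s = 0\<close> that \<open>u \<in> V\<close>])
qed

definition prv :: "nat \<Rightarrow> nat \<Rightarrow> nat" where
  "prv n i = (if i = 1 then n else i - 1)"

lemma nxt_eq: "i \<in> {1..n} \<Longrightarrow> nxt n i = (if i < n then i + 1 else 1)"
  by (auto simp: nxt_def)

lemma nxt_in: "i \<in> {1..n} \<Longrightarrow> nxt n i \<in> {1..n}"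
  by (auto simp: nxt_eq)

lemma prv_in: "i \<in> {1..n} \<Longrightarrow> prv n i \<in> {1..n}"
  by (auto simp: prv_def)

lemma nxt_prv: "i \<in> {1..n} \<Longrightarrow> nxt n (prv n i) = i"
  by (cases "i = 1") (auto simp: prv_def nxt_def)

text \<open>
  The edges of \<open>U\<^sub>n\<close> contributed by index \<open>i\<close>; the successor on indices is a parameter so
  that cells can also be written in offset coordinates.
\<close>

definition U_cell :: "(nat \<Rightarrow> nat) \<Rightarrow> nat \<Rightarrow> (vtx \<times> vtx) set" where
  "U_cell succ i = {((LA,i),(LA,succ i)), ((LB,i),(LB,succ i)), ((LE,i),(LE,succ i)),
      ((LA,i),(LB,i)), ((LB,i),(LC,i)), ((LC,i),(LD,i)), ((LD,i),(LE,i)),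
      ((LC,succ i),(LD,i))}"

definition U_nbrs :: "(nat \<Rightarrow> nat) \<Rightarrow> (nat \<Rightarrow> nat) \<Rightarrow> vtx \<Rightarrow> vtx list" where
  "U_nbrs succ pred u = (case u of (L, i) \<Rightarrow> (case L of
     LA \<Rightarrow> [(LA, succ i), (LA, pred i), (LB, i)]
   | LB \<Rightarrow> [(LB, succ i), (LB, pred i), (LA, i), (LC, i)]
   | LC \<Rightarrow> [(LB, i), (LD, i), (LD, pred i)]
   | LD \<Rightarrow> [(LC, i), (LE, i), (LC, succ i)]
   | LE \<Rightarrow> [(LE, succ i), (LE, pred i), (LD, i)]))"

lemma U_edges_eq_cells: "U_edges n = (\<Union>i\<in>{1..n}. U_cell (nxt n) i)"
  unfolding U_edges_def U_cell_def ..

lemma U_adj_iff_cell: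
  "U_adj n u v \<longleftrightarrow> (\<exists>i\<in>{1..n}. (u, v) \<in> U_cell (nxt n) i \<or> (v, u) \<in> U_cell (nxt n) i)"
  unfolding U_adj_def U_edges_eq_cells by blast

lemma U_cell_in_verts:
  "i \<in> {1..n} \<Longrightarrow> (x, y) \<in> U_cell (nxt n) i \<Longrightarrow> x \<in> U_verts n \<and> y \<in> U_verts n"
  using nxt_in[of i n] by (auto simp: U_cell_def U_verts_def)

lemma U_adj_in_verts: "U_adj n u w \<Longrightarrow> w \<in> U_verts n"
  unfolding U_adj_iff_cell using U_cell_in_verts by blast

lemma U_adj_nbrs:
  assumes i: "i \<in> {1..n}" and w: "w \<in> set (U_nbrs (nxt n) (prv n) (L, i))"
  shows "U_adj n (L, i) w"
proof -
  let ?edge = "\<lambda>j. ((L, i), w) \<in> U_cell (nxt n) j \<or> (w, (L, i)) \<in> U_cell (nxt n) j"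
  have "?edge i \<or> ?edge (prv n i)"
    using w nxt_prv[OF i] by (cases L) (auto simp: U_nbrs_def U_cell_def)
  then show ?thesis
    unfolding U_adj_iff_cell using i prv_in[OF i] by blast
qed

lemma all_lbl_iff: "(\<forall>L. P L) \<longleftrightarrow> P LA \<and> P LB \<and> P LC \<and> P LD \<and> P LE"
  by (metis lbl.exhaust)

lemma gdist_U_eqI:
  assumes lip: "\<forall>i\<in>{1..n}. \<forall>(x, y)\<in>U_cell (nxt n) i. f x \<le> f y + 1 \<and> f y \<le> f x + 1"
    and desc: "\<forall>i\<in>{1..n}. \<forall>L. 0 < f (L, i) \<longrightarrow>
                 (\<exists>w\<in>set (U_nbrs (nxt n) (prv n) (L, i)). f w + 1 = f (L, i))"
    and zero: "\<forall>i\<in>{1..n}. \<forall>L. f (L, i) = 0 \<longrightarrow> (L, i) = s"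
    and "f s = 0" and "u \<in> U_verts n"
  shows "gdist (U_adj n) u s = f u"
proof (rule gdist_eq_potential[where V = "U_verts n"])
  show "w \<in> U_verts n" if "U_adj n v w" for v w
    using U_adj_in_verts[OF that] .
  show "f v \<le> f w + 1" if "U_adj n v w" for v w
    using that lip unfolding U_adj_iff_cell by fastforce
  show "\<exists>w. U_adj n v w \<and> f w + 1 = f v" if "v \<in> U_verts n" "0 < f v" for v
  proof -
    obtain L i where v: "v = (L, i)" and i: "i \<in> {1..n}"
      using \<open>v \<in> U_verts n\<close> by (auto simp: U_verts_def)
    then obtain w where "w \<in> set (U_nbrs (nxt n) (prv n) (L, i))" "f w + 1 = f v"
      using desc \<open>0 < f v\<close> by blast
    then show ?thesis using U_adj_nbrs[OF i] v by blast
  qed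
  show "v = s" if "v \<in> U_verts n" "f v = 0" for v
    using that zero by (auto simp: U_verts_def)
  show "f s = 0" "u \<in> U_verts n" by fact+
qed

text \<open>
  Offsets \<open>0..n-1\<close> of indices from a base index \<open>s\<close>: \<open>rot n s\<close> relabels \<open>U\<^sub>n\<close> so that \<open>s\<close>
  becomes \<open>0\<close> and the successor becomes \<open>succ_mod n\<close>.
\<close>

definition offset :: "nat \<Rightarrow> nat \<Rightarrow> nat \<Rightarrow> nat" where
  "offset n s i = (if s \<le> i then i - s else i + n - s)"

definition rot :: "nat \<Rightarrow> nat \<Rightarrow> vtx \<Rightarrow> vtx" where
  "rot n s u = (fst u, offset n s (snd u))"

definition succ_mod :: "nat \<Rightarrow> nat \<Rightarrow> nat" where
  "succ_mod n t = (if t + 1 = n then 0 else t + 1)"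

definition pred_mod :: "nat \<Rightarrow> nat \<Rightarrow> nat" where
  "pred_mod n t = (if t = 0 then n - 1 else t - 1)"

lemma offset_less: "i \<in> {1..n} \<Longrightarrow> s \<in> {1..n} \<Longrightarrow> offset n s i < n"
  by (auto simp: offset_def)

lemma offset_eq_0_iff: "i \<in> {1..n} \<Longrightarrow> s \<in> {1..n} \<Longrightarrow> offset n s i = 0 \<longleftrightarrow> i = s"
  by (auto simp: offset_def)

lemma offset_nxt: "i \<in> {1..n} \<Longrightarrow> s \<in> {1..n} \<Longrightarrow> offset n s (nxt n i) = succ_mod n (offset n s i)"
  by (auto simp: nxt_eq offset_def succ_mod_def)

lemma offset_prv: "i \<in> {1..n} \<Longrightarrow> s \<in> {1..n} \<Longrightarrow> offset n s (prv n i) = pred_mod n (offset n s i)"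
  by (auto simp: prv_def offset_def pred_mod_def)

lemma succ_mod_less: "t < n \<Longrightarrow> succ_mod n t < n"
  by (simp add: succ_mod_def)

lemma rot_cell:
  assumes "i \<in> {1..n}" "s \<in> {1..n}" "(x, y) \<in> U_cell (nxt n) i"
  shows "(rot n s x, rot n s y) \<in> U_cell (succ_mod n) (offset n s i)"
  using assms(3) unfolding U_cell_def
  by (elim insertE emptyE) (simp_all add: rot_def offset_nxt[OF assms(1,2)])

lemma rot_nbrs:
  assumes "i \<in> {1..n}" "s \<in> {1..n}"
  shows "map (rot n s) (U_nbrs (nxt n) (prv n) (L, i))
           = U_nbrs (succ_mod n) (pred_mod n) (rot n s (L, i))"
  by (cases L) (simp_all add: U_nbrs_def rot_def offset_nxt[OF assms] offset_prv[OF assms])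

text \<open>
  \<open>c_dist n (L, t)\<close> is the distance from \<open>c\<^sub>0\<close> to \<open>L\<^sub>t\<close>, indices taken modulo \<open>n\<close>: the
  \<open>c\<close>-vertices next to \<open>c\<^sub>0\<close> along the \<open>c\<close>-\<open>d\<close> zigzag are reached in two steps, all
  others via the \<open>b\<close>-cycle.
\<close>

definition c_dist_c :: "nat \<Rightarrow> nat \<Rightarrow> nat" where
  "c_dist_c n t = (if t = 0 then 0 else if t = 1 \<or> t + 1 = n then 2 else 2 + min t (n - t))"

definition c_dist :: "nat \<Rightarrow> vtx \<Rightarrow> nat" where
  "c_dist n u = (case u of (L, t) \<Rightarrow> (case L of
     LA \<Rightarrow> 2 + min t (n - t)
   | LB \<Rightarrow> 1 + min t (n - t)
   | LC \<Rightarrow> c_dist_c n t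
   | LD \<Rightarrow> 1 + min (c_dist_c n t) (c_dist_c n (succ_mod n t))
   | LE \<Rightarrow> 2 + min t (n - 1 - t)))"

lemma c_dist_cell_lipschitz:
  assumes "n \<ge> 3" "t < n" "(x, y) \<in> U_cell (succ_mod n) t"
  shows "c_dist n x \<le> c_dist n y + 1 \<and> c_dist n y \<le> c_dist n x + 1"
  using assms by (auto simp: U_cell_def c_dist_def c_dist_c_def succ_mod_def min_def)

text \<open>The next vertex on a shortest path from \<open>L\<^sub>t\<close> to \<open>c\<^sub>0\<close>.\<close>

definition c_parent :: "nat \<Rightarrow> vtx \<Rightarrow> vtx" where
  "c_parent n u = (case u of (L, t) \<Rightarrow> (case L of
     LA \<Rightarrow> (LB, t)
   | LB \<Rightarrow> if t = 0 then (LC, t) else if 2 * t \<le> n then (LB, pred_mod n t) else (LB, succ_mod n t)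
   | LC \<Rightarrow> if t = 1 then (LD, pred_mod n t) else if t + 1 = n then (LD, t) else (LB, t)
   | LD \<Rightarrow> if c_dist_c n t \<le> c_dist_c n (succ_mod n t) then (LC, t) else (LC, succ_mod n t)
   | LE \<Rightarrow> if t = 0 \<or> t + 1 = n then (LD, t)
           else if 2 * t + 1 \<le> n then (LE, pred_mod n t) else (LE, succ_mod n t)))"

lemma c_parent_in_nbrs: "c_parent n (L, t) \<in> set (U_nbrs (succ_mod n) (pred_mod n) (L, t))"
  by (cases L) (simp_all add: c_parent_def U_nbrs_def)

lemma c_dist_c_parent:
  assumes "n \<ge> 3" "t < n" "0 < c_dist n (L, t)"
  shows "c_dist n (c_parent n (L, t)) + 1 = c_dist n (L, t)"
  using assms
  by (cases L)
     (auto simp: c_parent_def c_dist_def c_dist_c_def succ_mod_def pred_mod_def min_def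
           split: if_splits)

lemma c_dist_eq_0_iff: "c_dist n (L, t) = 0 \<longleftrightarrow> L = LC \<and> t = 0"
  by (cases L) (simp_all add: c_dist_def c_dist_c_def)

lemma gdist_c:
  assumes "n \<ge> 3" "s \<in> {1..n}" "u \<in> U_verts n"
  shows "gdist (U_adj n) u (LC, s) = c_dist n (rot n s u)"
proof (rule gdist_U_eqI)
  show "\<forall>i\<in>{1..n}. \<forall>(x, y)\<in>U_cell (nxt n) i.
          c_dist n (rot n s x) \<le> c_dist n (rot n s y) + 1 \<and>
          c_dist n (rot n s y) \<le> c_dist n (rot n s x) + 1"
    using c_dist_cell_lipschitz[OF \<open>n \<ge> 3\<close> offset_less rot_cell] \<open>s \<in> {1..n}\<close> by blast
  show "\<forall>i\<in>{1..n}. \<forall>L. 0 < c_dist n (rot n s (L, i)) \<longrightarrow>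
          (\<exists>w\<in>set (U_nbrs (nxt n) (prv n) (L, i)).
             c_dist n (rot n s w) + 1 = c_dist n (rot n s (L, i)))"
  proof (intro ballI allI impI)
    fix i L assume i: "i \<in> {1..n}" and pos: "0 < c_dist n (rot n s (L, i))"
    let ?p = "c_parent n (rot n s (L, i))"
    have "?p \<in> rot n s ` set (U_nbrs (nxt n) (prv n) (L, i))"
      using c_parent_in_nbrs rot_nbrs[OF i \<open>s \<in> {1..n}\<close>] by (metis list.set_map rot_def)
    moreover have "c_dist n ?p + 1 = c_dist n (rot n s (L, i))"
      using c_dist_c_parent[OF \<open>n \<ge> 3\<close> offset_less[OF i \<open>s \<in> {1..n}\<close>]] pos
      by (simp add: rot_def)
    ultimately show "\<exists>w\<in>set (U_nbrs (nxt n) (prv n) (L, i)).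
                       c_dist n (rot n s w) + 1 = c_dist n (rot n s (L, i))"
      by force
  qed
  show "\<forall>i\<in>{1..n}. \<forall>L. c_dist n (rot n s (L, i)) = 0 \<longrightarrow> (L, i) = (LC, s)"
    using offset_eq_0_iff \<open>s \<in> {1..n}\<close> by (simp add: rot_def c_dist_eq_0_iff)
  show "c_dist n (rot n s (LC, s)) = 0"
    by (simp add: rot_def offset_def c_dist_def c_dist_c_def)
  show "u \<in> U_verts n" by fact
qed

lemma c_dist_even:
  assumes "k \<ge> 2" "n = 2 * k" "t < n"
  shows "c_dist n (LA, t) = (if t \<le> k then 2 + t else 2 + n - t)"
    and "c_dist n (LB, t) = (if t \<le> k then 1 + t else 1 + n - t)"
    and "c_dist n (LC, t) = (if t = 0 then 0 else if t = 1 \<or> t + 1 = n then 2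
                             else if t \<le> k then 2 + t else 2 + n - t)"
    and "c_dist n (LD, t) = (if t = 0 \<or> t + 1 = n then 1 else if t = 1 \<or> t + 2 = n then 3
                             else if t + 1 \<le> k then 3 + t else 2 + n - t)"
    and "c_dist n (LE, t) = (if t + 1 \<le> k then 2 + t else 1 + n - t)"
  using assms by (auto simp: c_dist_def c_dist_c_def succ_mod_def min_def)

lemma c_dist_blind_edges:
  assumes "k \<ge> 2" "n = 2 * k" "t < n"
  shows "c_dist n (LA, t) \<noteq> c_dist n (LA, succ_mod n t)"
    and "c_dist n (LB, t) \<noteq> c_dist n (LB, succ_mod n t)"
    and "c_dist n (LA, t) \<noteq> c_dist n (LB, t)"
    and "c_dist n (LE, t) = c_dist n (LE, succ_mod n t) \<Longrightarrow> t \<in> {k - 1, 2 * k - 1}"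
    and "c_dist n (LB, t) = c_dist n (LC, t) \<Longrightarrow> t \<in> {1, 2 * k - 1}"
    and "c_dist n (LC, t) = c_dist n (LD, t) \<Longrightarrow> t \<in> {k..2 * k - 3}"
    and "c_dist n (LD, t) = c_dist n (LE, t) \<Longrightarrow> t \<in> {1, 2 * k - 2}"
    and "c_dist n (LC, succ_mod n t) = c_dist n (LD, t) \<Longrightarrow> t \<in> {2..k - 1}"
  unfolding c_dist_even[OF assms] c_dist_even[OF assms(1,2) succ_mod_less[OF assms(3)]]
  using assms by (simp_all add: succ_mod_def split: if_splits) arith+

text \<open>
  The offsets of the cells in which \<open>c\<^sub>0\<close> does not resolve the \<open>e\<close>-edge, the \<open>bc\<close>-, \<open>cd\<close>-,
  \<open>de\<close>-edge and the edge \<open>c\<^sub>t\<^sub>+\<^sub>1d\<^sub>t\<close>, respectively.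
\<close>

definition c_blind :: "nat \<Rightarrow> nat set list" where
  "c_blind k = [{k - 1, 2 * k - 1}, {1, 2 * k - 1}, {k..2 * k - 3}, {1, 2 * k - 2}, {2..k - 1}]"

lemma c_pair_resolves_cell:
  assumes "k \<ge> 2" "n = 2 * k" "s \<in> {1..n}" "s' \<in> {1..n}" "i \<in> {1..n}"
    and "(x, y) \<in> U_cell (nxt n) i"
    and "\<forall>S\<in>set (c_blind k). offset n s i \<notin> S \<or> offset n s' i \<notin> S"
  shows "c_dist n (rot n s x) \<noteq> c_dist n (rot n s y) \<or> c_dist n (rot n s' x) \<noteq> c_dist n (rot n s' y)"
proof -
  let ?t = "offset n s i" and ?t' = "offset n s' i"
  have "?t < n" "?t' < n" using offset_less assms(3-5) by auto
  note blind = c_dist_blind_edges[OF assms(1,2) \<open>?t < n\<close>] c_dist_blind_edges[OF assms(1,2) \<open>?t' < n\<close>]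
  have sep: "?t \<notin> S \<or> ?t' \<notin> S" if "S \<in> set (c_blind k)" for S
    using assms(7) that by blast
  have "{k - 1, 2 * k - 1} \<in> set (c_blind k)" "{1, 2 * k - 1} \<in> set (c_blind k)"
    "{k..2 * k - 3} \<in> set (c_blind k)" "{1, 2 * k - 2} \<in> set (c_blind k)" "{2..k - 1} \<in> set (c_blind k)"
    by (simp_all add: c_blind_def)
  note sep_classes = this[THEN sep]
  from assms(6) show ?thesis
    unfolding U_cell_def
    by (elim insertE emptyE; simp add: rot_def offset_nxt[OF assms(5,3)] offset_nxt[OF assms(5,4)];
        use blind sep_classes in blast)
qed

lemma local_resolving_pairI:
  assumes "w \<in> U_verts n" "w' \<in> U_verts n"
    and "\<And>u. u \<in> U_verts n \<Longrightarrow> gdist (U_adj n) u w = g u"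
    and "\<And>u. u \<in> U_verts n \<Longrightarrow> gdist (U_adj n) u w' = g' u"
    and "\<forall>i\<in>{1..n}. \<forall>(x, y)\<in>U_cell (nxt n) i. g x \<noteq> g y \<or> g' x \<noteq> g' y"
  shows "local_resolving_set (U_verts n) (U_adj n) {w, w'}"
  unfolding local_resolving_set_def
proof (intro conjI ballI impI)
  show "{w, w'} \<subseteq> U_verts n" using assms(1,2) by simp
  fix u v assume u: "u \<in> U_verts n" and v: "v \<in> U_verts n" and "U_adj n u v"
  then obtain i where "i \<in> {1..n}" "(u, v) \<in> U_cell (nxt n) i \<or> (v, u) \<in> U_cell (nxt n) i"
    unfolding U_adj_iff_cell by blast
  then have "g u \<noteq> g v \<or> g' u \<noteq> g' v" using assms(5) by fastforce
  then show "\<exists>x\<in>{w, w'}. resolves (U_adj n) x u v"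
    unfolding resolves_def using assms(3,4) u v by auto
qed

lemma local_resolving_c_pair:
  assumes "k \<ge> 2" "n = 2 * k" "s \<in> {1..n}"
    and "\<forall>i\<in>{1..n}. \<forall>S\<in>set (c_blind k). offset n 1 i \<notin> S \<or> offset n s i \<notin> S"
  shows "local_resolving_set (U_verts n) (U_adj n) {(LC, 1), (LC, s)}"
proof (rule local_resolving_pairI[where g = "\<lambda>u. c_dist n (rot n 1 u)"
                                    and g' = "\<lambda>u. c_dist n (rot n s u)"])
  have "n \<ge> 3" "1 \<in> {1..n}" using assms(1,2) by auto
  show "(LC, 1) \<in> U_verts n" "(LC, s) \<in> U_verts n"
    using \<open>1 \<in> {1..n}\<close> assms(3) by (simp_all add: U_verts_def)
  show "gdist (U_adj n) u (LC, 1) = c_dist n (rot n 1 u)" if "u \<in> U_verts n" for u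
    using gdist_c[OF \<open>n \<ge> 3\<close> \<open>1 \<in> {1..n}\<close> that] .
  show "gdist (U_adj n) u (LC, s) = c_dist n (rot n s u)" if "u \<in> U_verts n" for u
    using gdist_c[OF \<open>n \<ge> 3\<close> assms(3) that] .
  show "\<forall>i\<in>{1..n}. \<forall>(x, y)\<in>U_cell (nxt n) i.
          c_dist n (rot n 1 x) \<noteq> c_dist n (rot n 1 y) \<or> c_dist n (rot n s x) \<noteq> c_dist n (rot n s y)"
    using c_pair_resolves_cell[OF assms(1,2) \<open>1 \<in> {1..n}\<close> assms(3)] assms(4) by blast
qed

lemma local_resolving_U6: "local_resolving_set (U_verts 6) (U_adj 6) {(LC, 1), (LC, 2)}"
  by (rule local_resolving_c_pair[where k = 3]) (auto simp: c_blind_def offset_def)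

lemma local_resolving_U_ge10:
  assumes "k \<ge> 5" "n = 2 * k"
  shows "local_resolving_set (U_verts n) (U_adj n) {(LC, 1), (LC, k)}"
  by (rule local_resolving_c_pair) (use assms in \<open>auto simp: c_blind_def offset_def\<close>)

definition dist_e1_U4 :: "vtx \<Rightarrow> nat" where
  "dist_e1_U4 u = (case fst u of
     LA \<Rightarrow> [4, 4, 5, 5] | LB \<Rightarrow> [3, 3, 4, 4] | LC \<Rightarrow> [2, 2, 3, 3]
   | LD \<Rightarrow> [1, 2, 3, 2] | LE \<Rightarrow> [0, 1, 2, 1]) ! (snd u - 1)"

definition dist_d4_U8 :: "vtx \<Rightarrow> nat" where
  "dist_d4_U8 u = (case fst u of
     LA \<Rightarrow> [6, 5, 4, 3, 3, 4, 5, 6] | LB \<Rightarrow> [5, 4, 3, 2, 2, 3, 4, 5]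
   | LC \<Rightarrow> [6, 5, 3, 1, 1, 3, 5, 6] | LD \<Rightarrow> [5, 4, 2, 0, 2, 4, 5, 6]
   | LE \<Rightarrow> [4, 3, 2, 1, 2, 3, 4, 5]) ! (snd u - 1)"

lemma gdist_e1_U4: "u \<in> U_verts 4 \<Longrightarrow> gdist (U_adj 4) u (LE, 1) = dist_e1_U4 u"
proof (rule gdist_U_eqI)
  have "{1..4::nat} = {1, 2, 3, 4}" by auto
  then show "\<forall>i\<in>{1..4}. \<forall>(x, y)\<in>U_cell (nxt 4) i.
          dist_e1_U4 x \<le> dist_e1_U4 y + 1 \<and> dist_e1_U4 y \<le> dist_e1_U4 x + 1"
    and "\<forall>i\<in>{1..4}. \<forall>L. 0 < dist_e1_U4 (L, i) \<longrightarrow>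
          (\<exists>w\<in>set (U_nbrs (nxt 4) (prv 4) (L, i)). dist_e1_U4 w + 1 = dist_e1_U4 (L, i))"
    and "\<forall>i\<in>{1..4}. \<forall>L. dist_e1_U4 (L, i) = 0 \<longrightarrow> (L, i) = (LE, 1)"
    by (simp_all add: U_cell_def U_nbrs_def nxt_def prv_def dist_e1_U4_def all_lbl_iff)
qed (simp_all add: dist_e1_U4_def)

lemma gdist_d4_U8: "u \<in> U_verts 8 \<Longrightarrow> gdist (U_adj 8) u (LD, 4) = dist_d4_U8 u"
proof (rule gdist_U_eqI)
  have "{1..8::nat} = {1, 2, 3, 4, 5, 6, 7, 8}" by auto
  then show "\<forall>i\<in>{1..8}. \<forall>(x, y)\<in>U_cell (nxt 8) i.
          dist_d4_U8 x \<le> dist_d4_U8 y + 1 \<and> dist_d4_U8 y \<le> dist_d4_U8 x + 1"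
    and "\<forall>i\<in>{1..8}. \<forall>L. 0 < dist_d4_U8 (L, i) \<longrightarrow>
          (\<exists>w\<in>set (U_nbrs (nxt 8) (prv 8) (L, i)). dist_d4_U8 w + 1 = dist_d4_U8 (L, i))"
    and "\<forall>i\<in>{1..8}. \<forall>L. dist_d4_U8 (L, i) = 0 \<longrightarrow> (L, i) = (LD, 4)"
    by (simp_all add: U_cell_def U_nbrs_def nxt_def prv_def dist_d4_U8_def all_lbl_iff)
qed (simp_all add: dist_d4_U8_def)

lemma local_resolving_U4: "local_resolving_set (U_verts 4) (U_adj 4) {(LC, 1), (LE, 1)}"
proof (rule local_resolving_pairI[where g = "\<lambda>u. c_dist 4 (rot 4 1 u)" and g' = dist_e1_U4])
  show "gdist (U_adj 4) u (LC, 1) = c_dist 4 (rot 4 1 u)" if "u \<in> U_verts 4" for u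
    using gdist_c[of 4 1 u] that by simp
  show "\<forall>i\<in>{1..4}. \<forall>(x, y)\<in>U_cell (nxt 4) i.
               c_dist 4 (rot 4 1 x) \<noteq> c_dist 4 (rot 4 1 y) \<or> dist_e1_U4 x \<noteq> dist_e1_U4 y"
    by code_simp
  show "gdist (U_adj 4) u (LE, 1) = dist_e1_U4 u" if "u \<in> U_verts 4" for u
    using gdist_e1_U4[OF that] .
qed (simp_all add: U_verts_def)

lemma local_resolving_U8: "local_resolving_set (U_verts 8) (U_adj 8) {(LC, 1), (LD, 4)}"
proof (rule local_resolving_pairI[where g = "\<lambda>u. c_dist 8 (rot 8 1 u)" and g' = dist_d4_U8])
  show "gdist (U_adj 8) u (LC, 1) = c_dist 8 (rot 8 1 u)" if "u \<in> U_verts 8" for u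
    using gdist_c[of 8 1 u] that by simp
  show "\<forall>i\<in>{1..8}. \<forall>(x, y)\<in>U_cell (nxt 8) i.
               c_dist 8 (rot 8 1 x) \<noteq> c_dist 8 (rot 8 1 y) \<or> dist_d4_U8 x \<noteq> dist_d4_U8 y"
    by code_simp
  show "gdist (U_adj 8) u (LD, 4) = dist_d4_U8 u" if "u \<in> U_verts 8" for u
    using gdist_d4_U8[OF that] .
qed (simp_all add: U_verts_def)

theorem lemma4p4:
  fixes k n :: nat
  assumes "k \<ge> 2" and "n = 2 * k"
  shows "local_resolving_set (U_verts n) (U_adj n)
           {(LC, 1), (if k = 2 then (LE, 1) else if k = 3 then (LC, 2)
                      else if k = 4 then (LD, 4) else (LC, k))}"
proof -
  consider "k = 2" | "k = 3" | "k = 4" | "k \<ge> 5" using assms(1) by linarith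
  then show ?thesis
  proof cases
    case 1
    then show ?thesis using assms(2) local_resolving_U4 by simp
  next
    case 2
    then show ?thesis using assms(2) local_resolving_U6 by simp
  next
    case 3
    then show ?thesis using assms(2) local_resolving_U8 by simp
  next
    case 4
    then show ?thesis using local_resolving_U_ge10[OF 4 assms(2)] by simp
  qed
qed

end
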